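(* Let $\mathscr{C}$ be an extensive category and $T$ a singletonizable Grothendieck topology on $\mathscr{C}$. Then $\mathrm{Sing}(T)\sim T$.
   Context: A Grothendieck topology $T$ on $\mathscr{C}$ assigns to each object $X$ a set of families $(\pi_i:U_i\to X)_{i\in I}$ ("coverings") such that isomorphisms form singleton coverings, coverings of members of a covering compose to coverings, and coverings pull back (pullbacks existing) along arbitrary morphisms to coverings. A morphism is universal if its pullback along every morphism exists; $\pi:Y\to X$ is $T$-locally split if there is a covering $(\pi_i:U_i\to X)$ and $\rho_i:U_i\to Y$ with $\pi\circ\rho_i=\pi_i$. $T_1\prec T_2$ means every universal $T_1$-locally split morphism is $T_2$-locally split; $T_1\sim T_2$ means $T_1\prec T_2$ and $T_2\prec T_1$. A category is extensive if it has an initial object, existing binary coproducts are disjoint, and existing coproducts are stable under pullback (for any existing $\coprod_iU_i$ and $f:X\to\coprod_iU_i$, the pullbacks of the injections exist and $X$ is their coproduct). $T$ is singletonizable if for every covering $(\phi_i:U_i\to X)_{i\in I}$ the coproduct $\coprod_iU_i$ exists. $\mathrm{Sing}(T)$ is the Grothendieck topology (on extensive $\mathscr{C}$) whose coverings are the singleton families $(\phi:\coprod_iU_i\to X)$ with $\phi|_{U_i}=\phi_i$, for all $T$-coverings $(\phi_i:U_i\to X)_{i\in I}$. *)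

theory Defs
  imports Main
begin

record ('o, 'm) cat =
  Obj :: "'o set"
  Arr :: "'m set"
  Dom :: "'m \<Rightarrow> 'o"
  Cod :: "'m \<Rightarrow> 'o"
  Comp :: "'m \<Rightarrow> 'm \<Rightarrow> 'm"   (* Comp C g f = g o f, defined when Cod f = Dom g *)
  Id :: "'o \<Rightarrow> 'm"

definition hom :: "('o, 'm) cat \<Rightarrow> 'o \<Rightarrow> 'o \<Rightarrow> 'm set" where
  "hom C X Y = {f \<in> Arr C. Dom C f = X \<and> Cod C f = Y}"

definition category :: "('o, 'm) cat \<Rightarrow> bool" where
  "category C \<longleftrightarrow>
     (\<forall>f \<in> Arr C. Dom C f \<in> Obj C \<and> Cod C f \<in> Obj C) \<and>
     (\<forall>X \<in> Obj C. Id C X \<in> hom C X X) \<and>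
     (\<forall>f \<in> Arr C. \<forall>g \<in> Arr C. Cod C f = Dom C g \<longrightarrow>
         Comp C g f \<in> hom C (Dom C f) (Cod C g)) \<and>
     (\<forall>f \<in> Arr C. Comp C (Id C (Cod C f)) f = f \<and> Comp C f (Id C (Dom C f)) = f) \<and>
     (\<forall>f \<in> Arr C. \<forall>g \<in> Arr C. \<forall>h \<in> Arr C. Cod C f = Dom C g \<longrightarrow> Cod C g = Dom C h \<longrightarrow>
         Comp C h (Comp C g f) = Comp C (Comp C h g) f)"

definition iso :: "('o, 'm) cat \<Rightarrow> 'm \<Rightarrow> bool" where
  "iso C f \<longleftrightarrow> f \<in> Arr C \<and>
     (\<exists>g \<in> hom C (Cod C f) (Dom C f). Comp C g f = Id C (Dom C f) \<and> Comp C f g = Id C (Cod C f))"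

definition initial :: "('o, 'm) cat \<Rightarrow> 'o \<Rightarrow> bool" where
  "initial C Z \<longleftrightarrow> Z \<in> Obj C \<and> (\<forall>X \<in> Obj C. \<exists>!f. f \<in> hom C Z X)"

definition is_pullback :: "('o, 'm) cat \<Rightarrow> 'm \<Rightarrow> 'm \<Rightarrow> 'm \<Rightarrow> 'm \<Rightarrow> bool" where
  "is_pullback C f g p1 p2 \<longleftrightarrow>
     f \<in> Arr C \<and> g \<in> Arr C \<and> Cod C f = Cod C g \<and>
     p1 \<in> hom C (Dom C p1) (Dom C f) \<and> p2 \<in> hom C (Dom C p1) (Dom C g) \<and>
     Comp C f p1 = Comp C g p2 \<and>
     (\<forall>q1 \<in> Arr C. \<forall>q2 \<in> Arr C.
        Dom C q1 = Dom C q2 \<and> Cod C q1 = Dom C f \<and> Cod C q2 = Dom C g \<and>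
        Comp C f q1 = Comp C g q2 \<longrightarrow>
        (\<exists>!u. u \<in> hom C (Dom C q1) (Dom C p1) \<and> Comp C p1 u = q1 \<and> Comp C p2 u = q2))"

definition has_pullback :: "('o, 'm) cat \<Rightarrow> 'm \<Rightarrow> 'm \<Rightarrow> bool" where
  "has_pullback C f g \<longleftrightarrow> (\<exists>p1 p2. is_pullback C f g p1 p2)"

definition is_coproduct ::
  "('o, 'm) cat \<Rightarrow> 'k set \<Rightarrow> ('k \<Rightarrow> 'o) \<Rightarrow> 'o \<Rightarrow> ('k \<Rightarrow> 'm) \<Rightarrow> bool" where
  "is_coproduct C I U Cp \<iota> \<longleftrightarrow>
     Cp \<in> Obj C \<and> (\<forall>i \<in> I. \<iota> i \<in> hom C (U i) Cp) \<and>
     (\<forall>Z \<in> Obj C. \<forall>f. (\<forall>i \<in> I. f i \<in> hom C (U i) Z) \<longrightarrow>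
        (\<exists>!h. h \<in> hom C Cp Z \<and> (\<forall>i \<in> I. Comp C h (\<iota> i) = f i)))"

definition has_coproduct :: "('o, 'm) cat \<Rightarrow> 'k set \<Rightarrow> ('k \<Rightarrow> 'o) \<Rightarrow> bool" where
  "has_coproduct C I U \<longleftrightarrow> (\<exists>Cp \<iota>. is_coproduct C I U Cp \<iota>)"

definition disjoint_binary_coproducts :: "('o, 'm) cat \<Rightarrow> bool" where
  "disjoint_binary_coproducts C \<longleftrightarrow>
     (\<forall>U Cp \<iota>. is_coproduct C (UNIV :: bool set) U Cp \<iota> \<longrightarrow>
        has_pullback C (\<iota> True) (\<iota> False) \<and>
        (\<forall>p1 p2. is_pullback C (\<iota> True) (\<iota> False) p1 p2 \<longrightarrow> initial C (Dom C p1)))"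

definition stable_coproducts :: "('o, 'm) cat \<Rightarrow> 'k itself \<Rightarrow> bool" where
  "stable_coproducts C _ \<longleftrightarrow>
     (\<forall>(I :: 'k set) U Cp \<iota> f. is_coproduct C I U Cp \<iota> \<longrightarrow> f \<in> Arr C \<longrightarrow> Cod C f = Cp \<longrightarrow>
        (\<forall>i \<in> I. has_pullback C (\<iota> i) f) \<and>
        (\<forall>a b. (\<forall>i \<in> I. is_pullback C (\<iota> i) f (a i) (b i)) \<longrightarrow>
               is_coproduct C I (\<lambda>i. Dom C (b i)) (Dom C f) b))"

text \<open>Extensive category; coproducts are considered for all index sets of the type 'i
  (the index type of covering families) and for binary ones.\<close>
definition extensive :: "('o, 'm) cat \<Rightarrow> 'i itself \<Rightarrow> bool" where
  "extensive C ity \<longleftrightarrow> category C \<and> (\<exists>Z. initial C Z) \<and> disjoint_binary_coproducts C \<and>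
     stable_coproducts C TYPE(bool) \<and> stable_coproducts C ity"

text \<open>A family over X is a pair (I, \<phi>) of an index set and arrows \<phi> i : U_i -> X.
  A topology assigns to each object a set of families.\<close>
type_synonym ('i, 'o, 'm) topology = "'o \<Rightarrow> ('i set \<times> ('i \<Rightarrow> 'm)) set"

definition grothendieck_topology :: "('o, 'm) cat \<Rightarrow> ('i, 'o, 'm) topology \<Rightarrow> bool" where
  "grothendieck_topology C T \<longleftrightarrow>
     (\<forall>X \<in> Obj C. \<forall>(I, \<phi>) \<in> T X. \<forall>i \<in> I. \<phi> i \<in> Arr C \<and> Cod C (\<phi> i) = X) \<and>
     (\<forall>f j. iso C f \<longrightarrow> ({j}, \<lambda>_. f) \<in> T (Cod C f)) \<and>
     (\<forall>X \<in> Obj C. \<forall>(I, \<phi>) \<in> T X. \<forall>J \<psi>.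
        (\<forall>i \<in> I. (J i, \<psi> i) \<in> T (Dom C (\<phi> i))) \<longrightarrow>
        (\<exists>K \<chi> b. (K, \<chi>) \<in> T X \<and> bij_betw b K (Sigma I J) \<and>
            (\<forall>k \<in> K. \<chi> k = Comp C (\<phi> (fst (b k))) (\<psi> (fst (b k)) (snd (b k)))))) \<and>
     (\<forall>X \<in> Obj C. \<forall>(I, \<phi>) \<in> T X. \<forall>f \<in> Arr C. Cod C f = X \<longrightarrow>
        (\<forall>i \<in> I. has_pullback C (\<phi> i) f) \<and>
        (\<forall>a b. (\<forall>i \<in> I. is_pullback C (\<phi> i) f (a i) (b i)) \<longrightarrow> (I, b) \<in> T (Dom C f)))"

definition universal :: "('o, 'm) cat \<Rightarrow> 'm \<Rightarrow> bool" where
  "universal C \<pi> \<longleftrightarrow> \<pi> \<in> Arr C \<and>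
     (\<forall>g \<in> Arr C. Cod C g = Cod C \<pi> \<longrightarrow> has_pullback C \<pi> g)"

definition locally_split :: "('o, 'm) cat \<Rightarrow> ('i, 'o, 'm) topology \<Rightarrow> 'm \<Rightarrow> bool" where
  "locally_split C T \<pi> \<longleftrightarrow> \<pi> \<in> Arr C \<and>
     (\<exists>I \<phi> \<rho>. (I, \<phi>) \<in> T (Cod C \<pi>) \<and>
        (\<forall>i \<in> I. \<rho> i \<in> hom C (Dom C (\<phi> i)) (Dom C \<pi>) \<and> Comp C \<pi> (\<rho> i) = \<phi> i))"

definition refines :: "('o, 'm) cat \<Rightarrow> ('i, 'o, 'm) topology \<Rightarrow> ('j, 'o, 'm) topology \<Rightarrow> bool" where
  "refines C T1 T2 \<longleftrightarrow>
     (\<forall>\<pi>. universal C \<pi> \<and> locally_split C T1 \<pi> \<longrightarrow> locally_split C T2 \<pi>)"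

definition top_equiv :: "('o, 'm) cat \<Rightarrow> ('i, 'o, 'm) topology \<Rightarrow> ('j, 'o, 'm) topology \<Rightarrow> bool" where
  "top_equiv C T1 T2 \<longleftrightarrow> refines C T1 T2 \<and> refines C T2 T1"

definition singletonizable :: "('o, 'm) cat \<Rightarrow> ('i, 'o, 'm) topology \<Rightarrow> bool" where
  "singletonizable C T \<longleftrightarrow>
     (\<forall>X \<in> Obj C. \<forall>(I, \<phi>) \<in> T X. has_coproduct C I (\<lambda>i. Dom C (\<phi> i)))"

definition Sing :: "('o, 'm) cat \<Rightarrow> ('i, 'o, 'm) topology \<Rightarrow> ('i, 'o, 'm) topology" where
  "Sing C T X = {({j}, \<lambda>_. \<phi>) | j \<phi>. \<exists>I \<phi>s Cp \<iota>. (I, \<phi>s) \<in> T X \<and>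
       is_coproduct C I (\<lambda>i. Dom C (\<phi>s i)) Cp \<iota> \<and> \<phi> \<in> hom C Cp X \<and>
       (\<forall>i \<in> I. Comp C \<phi> (\<iota> i) = \<phi>s i)}"

end

theory Submission
  imports Defs
begin

text \<open>A T-splitting of \<open>\<pi>\<close> consists of local sections \<open>\<rho>\<^sub>i\<close> over a covering \<open>(\<phi>\<^sub>i : U\<^sub>i \<rightarrow> X)\<close>;
  the universal property of \<open>\<coprod>U\<^sub>i\<close> glues them to one section \<open>\<rho>\<close> over the
  Sing(T)-covering \<open>\<coprod>U\<^sub>i \<rightarrow> X\<close>. Conversely, a section over \<open>\<coprod>U\<^sub>i \<rightarrow> X\<close> restricts
  along the injections to sections over the \<open>U\<^sub>i\<close>. Neither direction needs \<open>\<pi>\<close> to be universal,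
  \<open>T\<close> to be a Grothendieck topology, or \<open>C\<close> to be more than a category: extensivity
  is only what makes Sing(T) itself a Grothendieck topology.\<close>

lemma comp_in_hom:
  assumes "category C" "f \<in> hom C X Y" "g \<in> hom C Y Z"
  shows "Comp C g f \<in> hom C X Z"
  using assms unfolding category_def hom_def by auto

lemma comp_assoc:
  assumes "category C" "f \<in> hom C X Y" "g \<in> hom C Y Z" "h \<in> hom C Z W"
  shows "Comp C h (Comp C g f) = Comp C (Comp C h g) f"
  using assms unfolding category_def hom_def by auto

lemma coproduct_injection_in_hom:
  "is_coproduct C I U Cp \<iota> \<Longrightarrow> i \<in> I \<Longrightarrow> \<iota> i \<in> hom C (U i) Cp"
  unfolding is_coproduct_def by blast

lemma coproduct_copairing:
  assumes "is_coproduct C I U Cp \<iota>" "Z \<in> Obj C" "\<And>i. i \<in> I \<Longrightarrow> f i \<in> hom C (U i) Z"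
  obtains h where "h \<in> hom C Cp Z" "\<And>i. i \<in> I \<Longrightarrow> Comp C h (\<iota> i) = f i"
  using assms unfolding is_coproduct_def by metis

lemma locally_splitI:
  assumes "\<pi> \<in> Arr C" "(I, \<phi>) \<in> T (Cod C \<pi>)"
    and "\<And>i. i \<in> I \<Longrightarrow> \<rho> i \<in> hom C (Dom C (\<phi> i)) (Dom C \<pi>)"
    and "\<And>i. i \<in> I \<Longrightarrow> Comp C \<pi> (\<rho> i) = \<phi> i"
  shows "locally_split C T \<pi>"
  unfolding locally_split_def using assms by blast

lemma locally_splitE:
  assumes "locally_split C T \<pi>"
  obtains I \<phi> \<rho> where "\<pi> \<in> hom C (Dom C \<pi>) (Cod C \<pi>)" "(I, \<phi>) \<in> T (Cod C \<pi>)"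
    "\<And>i. i \<in> I \<Longrightarrow> \<rho> i \<in> hom C (Dom C (\<phi> i)) (Dom C \<pi>)"
    "\<And>i. i \<in> I \<Longrightarrow> Comp C \<pi> (\<rho> i) = \<phi> i"
  using assms unfolding locally_split_def hom_def by blast

lemma locally_split_if_locally_split_Sing:
  assumes cat: "category C" and "locally_split C (Sing C T) \<pi>"
  shows "locally_split C T \<pi>"
proof -
  obtain J \<psi> \<rho> where \<pi>: "\<pi> \<in> hom C (Dom C \<pi>) (Cod C \<pi>)"
    and cover: "(J, \<psi>) \<in> Sing C T (Cod C \<pi>)"
    and \<rho>_hom: "\<And>j. j \<in> J \<Longrightarrow> \<rho> j \<in> hom C (Dom C (\<psi> j)) (Dom C \<pi>)"
    and \<rho>_sect: "\<And>j. j \<in> J \<Longrightarrow> Comp C \<pi> (\<rho> j) = \<psi> j"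
    using assms(2) by (elim locally_splitE) blast
  from cover obtain j \<phi> I \<phi>s Cp \<iota> where J: "J = {j}" "\<psi> = (\<lambda>_. \<phi>)"
    and T_cover: "(I, \<phi>s) \<in> T (Cod C \<pi>)"
    and coprod: "is_coproduct C I (\<lambda>i. Dom C (\<phi>s i)) Cp \<iota>"
    and \<phi>: "\<phi> \<in> hom C Cp (Cod C \<pi>)" "\<And>i. i \<in> I \<Longrightarrow> Comp C \<phi> (\<iota> i) = \<phi>s i"
    unfolding Sing_def by blast
  have \<rho>: "\<rho> j \<in> hom C Cp (Dom C \<pi>)" "Comp C \<pi> (\<rho> j) = \<phi>"
    using \<rho>_hom \<rho>_sect J \<phi>(1) unfolding hom_def by auto
  show ?thesis
  proof (rule locally_splitI[where \<rho> = "\<lambda>i. Comp C (\<rho> j) (\<iota> i)"])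
    show "\<pi> \<in> Arr C" "(I, \<phi>s) \<in> T (Cod C \<pi>)"
      using \<pi> T_cover unfolding hom_def by auto
  next
    fix i assume i: "i \<in> I"
    have \<iota>: "\<iota> i \<in> hom C (Dom C (\<phi>s i)) Cp"
      using coproduct_injection_in_hom[OF coprod i] .
    show "Comp C (\<rho> j) (\<iota> i) \<in> hom C (Dom C (\<phi>s i)) (Dom C \<pi>)"
      using comp_in_hom[OF cat \<iota> \<rho>(1)] .
    show "Comp C \<pi> (Comp C (\<rho> j) (\<iota> i)) = \<phi>s i"
      using comp_assoc[OF cat \<iota> \<rho>(1) \<pi>] \<rho>(2) \<phi>(2)[OF i] by simp
  qed
qed

lemma locally_split_Sing_if_locally_split:
  assumes cat: "category C" and sing: "singletonizable C T"
    and "locally_split C T \<pi>"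
  shows "locally_split C (Sing C T) \<pi>"
proof -
  obtain I \<phi> \<rho> where \<pi>: "\<pi> \<in> hom C (Dom C \<pi>) (Cod C \<pi>)"
    and cover: "(I, \<phi>) \<in> T (Cod C \<pi>)"
    and \<rho>_hom: "\<And>i. i \<in> I \<Longrightarrow> \<rho> i \<in> hom C (Dom C (\<phi> i)) (Dom C \<pi>)"
    and \<rho>_sect: "\<And>i. i \<in> I \<Longrightarrow> Comp C \<pi> (\<rho> i) = \<phi> i"
    using assms(3) by (elim locally_splitE) blast
  have objs: "Cod C \<pi> \<in> Obj C" "Dom C \<pi> \<in> Obj C"
    using cat \<pi> unfolding category_def hom_def by auto
  obtain Cp \<iota> where coprod: "is_coproduct C I (\<lambda>i. Dom C (\<phi> i)) Cp \<iota>"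
    using sing objs(1) cover unfolding singletonizable_def has_coproduct_def by fastforce
  obtain \<rho>' where \<rho>': "\<rho>' \<in> hom C Cp (Dom C \<pi>)" "\<And>i. i \<in> I \<Longrightarrow> Comp C \<rho>' (\<iota> i) = \<rho> i"
    using coproduct_copairing[OF coprod objs(2) \<rho>_hom] by blast
  have \<pi>\<rho>': "Comp C \<pi> \<rho>' \<in> hom C Cp (Cod C \<pi>)"
    using comp_in_hom[OF cat \<rho>'(1) \<pi>] .
  have glued: "Comp C (Comp C \<pi> \<rho>') (\<iota> i) = \<phi> i" if i: "i \<in> I" for i
    using comp_assoc[OF cat coproduct_injection_in_hom[OF coprod i] \<rho>'(1) \<pi>] \<rho>'(2) \<rho>_sect i
    by simp
  have "({undefined}, \<lambda>_. Comp C \<pi> \<rho>') \<in> Sing C T (Cod C \<pi>)"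
    unfolding Sing_def using cover coprod \<pi>\<rho>' glued by blast
  then show ?thesis
    using \<pi> \<rho>'(1) \<pi>\<rho>' by (intro locally_splitI) (auto simp: hom_def)
qed

theorem mainTheorem7:
  fixes C :: "('o, 'm) cat" and T :: "('i, 'o, 'm) topology"
  assumes "extensive C TYPE('i)"
    and "grothendieck_topology C T"
    and "singletonizable C T"
  shows "top_equiv C (Sing C T) T"
proof -
  have cat: "category C"
    using assms(1) unfolding extensive_def by blast
  show ?thesis
    unfolding top_equiv_def refines_def
    using locally_split_if_locally_split_Sing[OF cat]
      locally_split_Sing_if_locally_split[OF cat assms(3)] by blast
qed

end
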